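(* Let $n\ge0$ and $k\ge1$ be integers, let $n=n_1+\dots+n_k$ with integers $n_i\ge0$, and let $m\ge n+k-1$. Then \[ \binom{m}{n}=\sum_{j=0}^{k-1}(-1)^j\binom{k-1}{j}\sum_{\substack{m_1+\dots+m_k=m-j\\ m_i\ge n_i}}\ \prod_{i=1}^{k}\binom{m_i}{n_i}. \] *)

theory Defs
  imports Main "HOL-Library.FuncSet"
begin

end

theory Submission
  imports Defs "HOL-Library.FuncSet"
begin

text \<open>
  Summing \<open>\<Prod>i. ms i choose nn i\<close> over all \<open>ms\<close> with \<open>\<Sum>i. ms i = M\<close> (the condition
  \<open>nn i \<le> ms i\<close> only discards vanishing terms) gives, by iterating the upper
  Vandermonde identity, \<open>(M + k - 1) choose (n + k - 1)\<close>. With \<open>M = m - j\<close> the right-hand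
  side becomes \<open>\<Sum>j. (-1)^j ((k-1) choose j) ((m + k - 1 - j) choose (n + k - 1))\<close>, which
  undoes \<open>k - 1\<close> applications of Pascal's rule and so equals \<open>m choose n\<close>.
\<close>

definition weak_compositions :: "'a set \<Rightarrow> nat \<Rightarrow> ('a \<Rightarrow> nat) set" where
  "weak_compositions I M = {ms \<in> I \<rightarrow>\<^sub>E UNIV. sum ms I = M}"

lemma weak_compositions_subset_PiE_atMost:
  assumes "finite I"
  shows "weak_compositions I M \<subseteq> I \<rightarrow>\<^sub>E {..M}"
proof
  fix ms assume "ms \<in> weak_compositions I M"
  moreover have "ms i \<le> sum ms I" if "i \<in> I" for i
    using assms that by (auto intro: member_le_sum)
  ultimately show "ms \<in> I \<rightarrow>\<^sub>E {..M}"
    by (auto simp: weak_compositions_def PiE_iff)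
qed

lemma finite_weak_compositions: "finite I \<Longrightarrow> finite (weak_compositions I M)"
  by (rule finite_subset[OF weak_compositions_subset_PiE_atMost]) (simp_all add: finite_PiE)

lemma weak_compositions_singleton: "weak_compositions {a} M = {(\<lambda>_. undefined)(a := M)}"
  by (auto simp: weak_compositions_def PiE_iff extensional_def fun_eq_iff)

lemma weak_compositions_insert:
  assumes "finite I" "a \<notin> I"
  shows "weak_compositions (insert a I) M =
    (\<lambda>(t, g). g(a := t)) ` (SIGMA t:{..M}. weak_compositions I (M - t))"
proof (intro equalityI subsetI)
  fix ms assume ms: "ms \<in> weak_compositions (insert a I) M"
  have "sum (ms(a := undefined)) I = sum ms I"
    using assms by (intro sum.cong) auto
  then have "sum ms (insert a I) = ms a + sum (ms(a := undefined)) I"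
    using assms by simp
  with ms have "ms a \<le> M" "ms(a := undefined) \<in> weak_compositions I (M - ms a)"
    by (auto simp: weak_compositions_def PiE_iff extensional_def)
  then show "ms \<in> (\<lambda>(t, g). g(a := t)) ` (SIGMA t:{..M}. weak_compositions I (M - t))"
    by (intro image_eqI[of _ _ "(ms a, ms(a := undefined))"]) auto
next
  fix ms assume "ms \<in> (\<lambda>(t, g). g(a := t)) ` (SIGMA t:{..M}. weak_compositions I (M - t))"
  then obtain t g where "ms = g(a := t)" "t \<le> M" "g \<in> I \<rightarrow>\<^sub>E UNIV" "sum g I = M - t"
    by (auto simp: weak_compositions_def)
  moreover have "sum (g(a := t)) I = sum g I"
    using assms by (intro sum.cong) auto
  ultimately show "ms \<in> weak_compositions (insert a I) M"
    using assms by (auto simp: weak_compositions_def PiE_iff extensional_def)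
qed

lemma sum_weak_compositions_insert:
  assumes "finite I" "a \<notin> I"
  shows "(\<Sum>ms\<in>weak_compositions (insert a I) M. f ms) =
    (\<Sum>t\<le>M. \<Sum>g\<in>weak_compositions I (M - t). f (g(a := t)))"
proof -
  have "inj_on (\<lambda>(t, g). g(a := t)) (SIGMA t:{..M}. weak_compositions I (M - t))"
    using inj_combinator[OF assms(2), of "\<lambda>_. UNIV"]
    by (rule inj_on_subset) (auto simp: weak_compositions_def)
  then show ?thesis
    using assms
    by (simp add: weak_compositions_insert sum.reindex sum.Sigma finite_weak_compositions
        case_prod_unfold)
qed

lemma choose_upper_vandermonde:
  "(\<Sum>t\<le>a. ((a - t) choose b) * (t choose c)) = Suc a choose (b + c + 1)"
proof (induction a arbitrary: b)
  case 0
  then show ?case by (cases b; cases c) auto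
next
  case (Suc a)
  show ?case
  proof (cases b)
    case 0
    then have "(\<Sum>t\<le>Suc a. ((Suc a - t) choose b) * (t choose c)) = (\<Sum>t\<le>Suc a. t choose c)"
      by simp
    also have "\<dots> = Suc (Suc a) choose Suc c"
      by (rule sum_choose_upper)
    finally show ?thesis
      using 0 by simp
  next
    case (Suc b')
    have "(\<Sum>t\<le>Suc a. ((Suc a - t) choose b) * (t choose c))
        = (\<Sum>t\<le>a. ((Suc a - t) choose b) * (t choose c))"
      using Suc by (simp add: sum.atMost_Suc)
    also have "\<dots> = (\<Sum>t\<le>a. ((a - t) choose b') * (t choose c) + ((a - t) choose b) * (t choose c))"
      by (rule sum.cong) (auto simp: Suc Suc_diff_le algebra_simps)
    also have "\<dots> = (Suc a choose (b' + c + 1)) + (Suc a choose (b + c + 1))"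
      by (simp add: sum.distrib Suc.IH)
    also have "\<dots> = Suc (Suc a) choose (b + c + 1)"
      using Suc by simp
    finally show ?thesis .
  qed
qed

lemma sum_weak_compositions_prod_choose:
  assumes "finite I" "I \<noteq> {}"
  shows "(\<Sum>ms\<in>weak_compositions I M. \<Prod>i\<in>I. ms i choose nn i)
    = (M + card I - 1) choose (sum nn I + card I - 1)"
  using assms
proof (induction I arbitrary: M rule: finite_ne_induct)
  case (singleton a)
  then show ?case by (simp add: weak_compositions_singleton)
next
  case (insert a F)
  define c where "c = card F"
  define N where "N = sum nn F"
  have "c \<ge> 1"
    using insert by (simp add: c_def Suc_leI card_gt_0_iff)
  have prod_upd: "(\<Prod>i\<in>insert a F. (g(a := t)) i choose nn i)
      = (t choose nn a) * (\<Prod>i\<in>F. g i choose nn i)" for g t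
  proof -
    have "(\<Prod>i\<in>F. (g(a := t)) i choose nn i) = (\<Prod>i\<in>F. g i choose nn i)"
      using insert.hyps by (intro prod.cong) auto
    then show ?thesis
      using insert.hyps by simp
  qed
  have "(\<Sum>ms\<in>weak_compositions (insert a F) M. \<Prod>i\<in>insert a F. ms i choose nn i)
      = (\<Sum>t\<le>M. (t choose nn a) * (\<Sum>g\<in>weak_compositions F (M - t). \<Prod>i\<in>F. g i choose nn i))"
    using insert.hyps
    by (simp add: sum_weak_compositions_insert prod_upd sum_distrib_left del: fun_upd_apply prod.insert)
  also have "\<dots> = (\<Sum>t\<le>M. (((M + c - 1) - t) choose (N + c - 1)) * (t choose nn a))"
    using insert.IH by (intro sum.cong) (auto simp: c_def N_def)
  also have "\<dots> = (\<Sum>t\<le>M + c - 1. (((M + c - 1) - t) choose (N + c - 1)) * (t choose nn a))"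
    \<comment> \<open>for \<open>t > M\<close> the first factor vanishes since \<open>M + c - 1 - t < c - 1\<close>\<close>
    using \<open>c \<ge> 1\<close> by (intro sum.mono_neutral_left) auto
  also have "\<dots> = Suc (M + c - 1) choose (N + c - 1 + nn a + 1)"
    by (rule choose_upper_vandermonde)
  also have "\<dots> = (M + card (insert a F) - 1) choose (sum nn (insert a F) + card (insert a F) - 1)"
    using insert.hyps \<open>c \<ge> 1\<close> by (simp add: c_def N_def algebra_simps)
  finally show ?case .
qed

lemma sum_prod_choose_over_dominating_compositions:
  assumes "finite I" "I \<noteq> {}"
  shows "(\<Sum>ms\<in>{ms \<in> I \<rightarrow>\<^sub>E UNIV. sum ms I = M \<and> (\<forall>i\<in>I. nn i \<le> ms i)}.
            \<Prod>i\<in>I. ms i choose nn i)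
    = (M + card I - 1) choose (sum nn I + card I - 1)"
proof -
  have "(\<Sum>ms\<in>{ms \<in> I \<rightarrow>\<^sub>E UNIV. sum ms I = M \<and> (\<forall>i\<in>I. nn i \<le> ms i)}.
            \<Prod>i\<in>I. ms i choose nn i)
      = (\<Sum>ms\<in>weak_compositions I M. \<Prod>i\<in>I. ms i choose nn i)"
    using assms(1)
    by (intro sum.mono_neutral_left finite_weak_compositions)
      (auto simp: weak_compositions_def not_le)
  then show ?thesis
    using assms by (simp add: sum_weak_compositions_prod_choose)
qed

lemma alternating_sum_choose_shifted:
  "(\<Sum>j=0..K. (-1::int)^j * int (K choose j) * int ((m + K - j) choose (n + K))) = int (m choose n)"
proof (induction K arbitrary: m n)
  case 0
  then show ?case by simp
next
  case (Suc K)
  \<comment> \<open>Pascal's rule for \<open>Suc K choose j\<close> splits the sum into two sums of the same shape\<close>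
  have "(\<Sum>j=0..Suc K. (-1::int)^j * int (Suc K choose j) * int ((m + Suc K - j) choose (n + Suc K)))
      = (\<Sum>j=0..Suc K. (-1::int)^j * int (K choose j) * int ((m + Suc K - j) choose (n + Suc K)))
      + (\<Sum>j=0..Suc K. (-1::int)^j * int (if j = 0 then 0 else K choose (j - 1))
                                    * int ((m + Suc K - j) choose (n + Suc K)))"
    (is "_ = ?lower + ?upper")
    unfolding sum.distrib[symmetric]
    by (intro sum.cong refl) (auto simp: algebra_simps choose_reduce_nat)
  moreover have "?lower = (\<Sum>j=0..K. (-1::int)^j * int (K choose j)
                                      * int ((Suc m + K - j) choose (Suc n + K)))"
    by (simp add: sum.atLeast0_atMost_Suc)
  moreover have "?upper = - (\<Sum>j=0..K. (-1::int)^j * int (K choose j)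
                                        * int ((m + K - j) choose (Suc n + K)))"
    by (subst sum.atLeast0_atMost_Suc_shift) (simp add: sum_negf)
  ultimately have "(\<Sum>j=0..Suc K. (-1::int)^j * int (Suc K choose j)
                                    * int ((m + Suc K - j) choose (n + Suc K)))
      = int (Suc m choose Suc n) - int (m choose Suc n)"
    by (simp only: Suc.IH)
  also have "\<dots> = int (m choose n)"
    by simp
  finally show ?case .
qed

theorem proposition4p2:
  fixes n k m :: nat and nn :: "nat \<Rightarrow> nat"
  assumes "k \<ge> 1"
    and "n = (\<Sum>i=1..k. nn i)"
    and "m \<ge> n + k - 1"
  shows "int (m choose n) =
    (\<Sum>j=0..k-1. (-1)^j * int ((k-1) choose j) *
       (\<Sum>ms \<in> {ms \<in> {1..k} \<rightarrow>\<^sub>E UNIV.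
                    (\<Sum>i=1..k. ms i) = m - j \<and> (\<forall>i\<in>{1..k}. nn i \<le> ms i)}.
          int (\<Prod>i=1..k. (ms i choose nn i))))"
proof -
  have "(\<Sum>ms \<in> {ms \<in> {1..k} \<rightarrow>\<^sub>E UNIV.
                    (\<Sum>i=1..k. ms i) = m - j \<and> (\<forall>i\<in>{1..k}. nn i \<le> ms i)}.
          int (\<Prod>i=1..k. (ms i choose nn i))) = int ((m + (k - 1) - j) choose (n + (k - 1)))"
    if "j \<le> k - 1" for j
    using sum_prod_choose_over_dominating_compositions[where I = "{1..k}" and M = "m - j" and nn = nn] assms that
    by (simp flip: of_nat_sum of_nat_prod add: algebra_simps)
  then have "(\<Sum>j=0..k-1. (-1)^j * int ((k-1) choose j) *
       (\<Sum>ms \<in> {ms \<in> {1..k} \<rightarrow>\<^sub>E UNIV.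
                    (\<Sum>i=1..k. ms i) = m - j \<and> (\<forall>i\<in>{1..k}. nn i \<le> ms i)}.
          int (\<Prod>i=1..k. (ms i choose nn i))))
     = (\<Sum>j=0..k-1. (-1::int)^j * int ((k-1) choose j) * int ((m + (k - 1) - j) choose (n + (k - 1))))"
    by (intro sum.cong) auto
  also have "\<dots> = int (m choose n)"
    by (rule alternating_sum_choose_shifted)
  finally show ?thesis by simp
qed

end
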